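(* There exists a finite graph $G$ which is $P_{6}$-induced-saturated.
   Context: $P_n$ denotes the path on $n$ vertices. A (simple) graph $G$ is called $H$-induced-saturated if (i) $G$ does not contain an induced subgraph isomorphic to $H$; (ii) for every edge $e\in E(G)$, the graph $G-e$ obtained by deleting $e$ contains an induced subgraph isomorphic to $H$; and (iii) for every pair $\{x,y\}$ of distinct non-adjacent vertices of $G$, the graph $G+xy$ obtained by adding the edge $xy$ contains an induced subgraph isomorphic to $H$. *)

theory Defs
  imports Main
begin

definition simple_graph :: "'a set \<Rightarrow> 'a set set \<Rightarrow> bool" where
  "simple_graph V Es \<longleftrightarrow> finite V \<and> (\<forall>e\<in>Es. e \<subseteq> V \<and> card e = 2)"

definition has_induced_path :: "nat \<Rightarrow> 'a set \<Rightarrow> 'a set set \<Rightarrow> bool" where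
  "has_induced_path n V Es \<longleftrightarrow>
     (\<exists>xs. length xs = n \<and> distinct xs \<and> set xs \<subseteq> V \<and>
        (\<forall>i<n. \<forall>j<n. {xs ! i, xs ! j} \<in> Es \<longleftrightarrow> (i = Suc j \<or> j = Suc i)))"

definition induced_path_saturated :: "nat \<Rightarrow> 'a set \<Rightarrow> 'a set set \<Rightarrow> bool" where
  "induced_path_saturated n V Es \<longleftrightarrow>
     \<not> has_induced_path n V Es \<and>
     (\<forall>e\<in>Es. has_induced_path n V (Es - {e})) \<and>
     (\<forall>x\<in>V. \<forall>y\<in>V. x \<noteq> y \<and> {x, y} \<notin> Es \<longrightarrow> has_induced_path n V (insert {x, y} Es))"

end

theory Submission
  imports Defs
begin

text \<open>
  The witness is the Clebsch graph, realised as the Cayley graph of the group \<open>(\<int>/2)\<^sup>4\<close>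
  (the numbers below 16 under bitwise xor) with connection set the four unit vectors and the
  all-ones vector. Translations \<open>v \<mapsto> a xor v\<close> are automorphisms acting transitively on the
  vertices, so every edge \<open>{a, b}\<close> is the image of \<open>{0, a xor b}\<close>, and likewise for non-edges.
  Hence only five edge deletions and ten edge additions at vertex 0 need an explicit induced
  \<open>P\<^sub>6\<close>, and \<open>P\<^sub>6\<close>-freeness reduces to an exhaustive search for induced paths ending at 0.
\<close>

definition extends_induced :: "('a \<Rightarrow> 'a \<Rightarrow> bool) \<Rightarrow> 'a \<Rightarrow> 'a list \<Rightarrow> bool" where
  "extends_induced R v p \<longleftrightarrow> v \<notin> set p \<and> \<not> R v v \<and> R v (hd p) \<and> (\<forall>z\<in>set (tl p). \<not> R v z)"

fun induced_path :: "('a \<Rightarrow> 'a \<Rightarrow> bool) \<Rightarrow> 'a list \<Rightarrow> bool" where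
  "induced_path R [] \<longleftrightarrow> True"
| "induced_path R [x] \<longleftrightarrow> \<not> R x x"
| "induced_path R (x # y # zs) \<longleftrightarrow> extends_induced R x (y # zs) \<and> induced_path R (y # zs)"

lemma induced_path_Cons_iff:
  "xs \<noteq> [] \<Longrightarrow> induced_path R (x # xs) \<longleftrightarrow> extends_induced R x xs \<and> induced_path R xs"
  by (cases xs) auto

lemma induced_path_appendD: "induced_path R (xs @ ys) \<Longrightarrow> induced_path R ys"
proof (induction xs)
  case (Cons x xs)
  then show ?case by (cases "xs @ ys") auto
qed simp

lemma extends_induced_iff_nth:
  assumes "xs \<noteq> []"
  shows "extends_induced R x xs \<longleftrightarrow>
    x \<notin> set xs \<and> \<not> R x x \<and> (\<forall>j<length xs. R x (xs ! j) \<longleftrightarrow> j = 0)"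
proof -
  obtain y ys where "xs = y # ys" using assms by (cases xs) auto
  then show ?thesis
    by (auto simp: extends_induced_def All_less_Suc2 all_set_conv_all_nth)
qed

lemma induced_path_iff_nth:
  assumes sym: "\<And>x y. R x y \<Longrightarrow> R y x"
  shows "induced_path R xs \<longleftrightarrow> distinct xs \<and>
    (\<forall>i<length xs. \<forall>j<length xs. R (xs ! i) (xs ! j) \<longleftrightarrow> i = Suc j \<or> j = Suc i)"
proof (induction xs)
  case (Cons x xs)
  show ?case
  proof (cases "xs = []")
    case False
    then show ?thesis
      using Cons.IH sym
      by (auto simp: induced_path_Cons_iff extends_induced_iff_nth All_less_Suc2)
  qed simp
qed simp

lemma induced_path_map:
  assumes "inj_on f (set xs)" "\<And>x y. x \<in> set xs \<Longrightarrow> y \<in> set xs \<Longrightarrow> R' (f x) (f y) \<longleftrightarrow> R x y"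
  shows "induced_path R' (map f xs) \<longleftrightarrow> induced_path R xs"
  using assms
proof (induction xs)
  case (Cons x xs)
  show ?case
  proof (cases "xs = []")
    case False
    have "extends_induced R' (f x) (map f xs) \<longleftrightarrow> extends_induced R x xs"
      using False Cons.prems
      by (auto simp: extends_induced_def hd_map map_tl[symmetric] list.set_sel)
    then show ?thesis
      using False Cons by (simp add: induced_path_Cons_iff)
  qed (use Cons.prems in simp)
qed simp

lemma induced_path_cong:
  "(\<And>x y. x \<in> set xs \<Longrightarrow> y \<in> set xs \<Longrightarrow> R' x y \<longleftrightarrow> R x y) \<Longrightarrow>
    induced_path R' xs \<longleftrightarrow> induced_path R xs"
  using induced_path_map[of id xs R' R] by simp

lemma has_induced_path_iff_induced_path:
  assumes "\<And>x y. x \<in> V \<Longrightarrow> y \<in> V \<Longrightarrow> {x, y} \<in> Es \<longleftrightarrow> R x y"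
  shows "has_induced_path n V Es \<longleftrightarrow>
    (\<exists>xs. length xs = n \<and> set xs \<subseteq> V \<and> induced_path R xs)"
proof -
  have "induced_path (\<lambda>x y. {x, y} \<in> Es) xs \<longleftrightarrow> induced_path R xs" if "set xs \<subseteq> V" for xs
    using that assms by (intro induced_path_cong) auto
  moreover have "induced_path (\<lambda>x y. {x, y} \<in> Es) xs \<longleftrightarrow> distinct xs \<and>
      (\<forall>i<length xs. \<forall>j<length xs. {xs ! i, xs ! j} \<in> Es \<longleftrightarrow> i = Suc j \<or> j = Suc i)" for xs
    by (rule induced_path_iff_nth) (simp add: insert_commute)
  ultimately show ?thesis
    unfolding has_induced_path_def by (metis (no_types, lifting))
qed

lemma has_induced_path_embedding:
  assumes "has_induced_path n V Es" "inj_on f V" "f ` V \<subseteq> V'"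
    and "\<And>x y. x \<in> V \<Longrightarrow> y \<in> V \<Longrightarrow> {f x, f y} \<in> Es' \<longleftrightarrow> {x, y} \<in> Es"
  shows "has_induced_path n V' Es'"
proof -
  obtain xs where xs: "length xs = n" "distinct xs" "set xs \<subseteq> V"
    "\<forall>i<n. \<forall>j<n. {xs ! i, xs ! j} \<in> Es \<longleftrightarrow> i = Suc j \<or> j = Suc i"
    using assms(1) by (auto simp: has_induced_path_def)
  have "distinct (map f xs)"
    using xs(2,3) assms(2) by (simp add: distinct_map inj_on_subset)
  moreover have "{map f xs ! i, map f xs ! j} \<in> Es' \<longleftrightarrow> i = Suc j \<or> j = Suc i"
    if "i < n" "j < n" for i j
    using that xs assms(4) by (auto simp: nth_mem subsetD)
  moreover have "set (map f xs) \<subseteq> V'"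
    using xs(3) assms(3) by auto
  ultimately show ?thesis
    unfolding has_induced_path_def using xs(1) by (intro exI[of _ "map f xs"]) auto
qed

fun extendable :: "('a \<Rightarrow> 'a \<Rightarrow> bool) \<Rightarrow> ('a \<Rightarrow> 'a list) \<Rightarrow> nat \<Rightarrow> 'a list \<Rightarrow> bool" where
  "extendable R N 0 p \<longleftrightarrow> True"
| "extendable R N (Suc k) p \<longleftrightarrow>
    (\<exists>v\<in>set (N (hd p)). extends_induced R v p \<and> extendable R N k (v # p))"

lemma extendable_if_induced_path:
  assumes nbrs: "\<And>x y. R y x \<Longrightarrow> y \<in> set (N x)"
    and "induced_path R (q @ p)" "p \<noteq> []"
  shows "extendable R N (length q) p"
  using assms(2,3)
proof (induction q arbitrary: p rule: rev_induct)
  case (snoc v q)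
  have "induced_path R (v # p)"
    using snoc.prems(1) induced_path_appendD[of R q "v # p"] by simp
  then have "extends_induced R v p"
    using snoc.prems(2) by (simp add: induced_path_Cons_iff)
  moreover have "extendable R N (length q) (v # p)"
    using snoc by simp
  ultimately show ?case
    using nbrs by (auto simp: extends_induced_def)
qed simp

lemma xor_less_power_of_two:
  fixes u v :: nat
  assumes "u < 2 ^ n" "v < 2 ^ n"
  shows "xor u v < 2 ^ n"
proof -
  have "xor u v = take_bit n (xor u v)"
    using assms by (simp add: take_bit_nat_eq_self_iff[THEN iffD2])
  then show ?thesis by (metis take_bit_nat_less_exp)
qed

lemma xor_cancel_left: "xor a (xor a b) = b"
  by (simp flip: xor.assoc)

lemma xor_xor_left: "xor (xor a u) (xor a v) = xor u v"
  by (metis xor.assoc xor.commute xor_cancel_left)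

lemma xor_eq_xor_iff: "xor a x = xor a y \<longleftrightarrow> x = y"
  by (metis xor_cancel_left)

lemma xor_doubleton_eq_iff: "{xor a x, xor a y} = {xor a u, xor a v} \<longleftrightarrow> {x, y} = {u, v}"
  by (auto simp: doubleton_eq_iff xor_eq_xor_iff)

definition clebsch_adj :: "nat \<Rightarrow> nat \<Rightarrow> bool" where
  "clebsch_adj u v \<longleftrightarrow> xor u v \<in> {1, 2, 4, 8, 15}"

definition clebsch_nbrs :: "nat \<Rightarrow> nat list" where
  "clebsch_nbrs u = map (xor u) [1, 2, 4, 8, 15]"

definition clebsch_V :: "nat set" where
  "clebsch_V = {..<16}"

definition clebsch_E :: "nat set set" where
  "clebsch_E = {{u, v} | u v. u \<in> clebsch_V \<and> v \<in> clebsch_V \<and> clebsch_adj u v}"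

lemma clebsch_adj_commute: "clebsch_adj u v \<longleftrightarrow> clebsch_adj v u"
  by (simp add: clebsch_adj_def xor.commute)

lemma clebsch_adj_irrefl: "\<not> clebsch_adj u u"
  by (simp add: clebsch_adj_def)

lemma clebsch_adj_xor: "clebsch_adj (xor a u) (xor a v) \<longleftrightarrow> clebsch_adj u v"
  by (simp add: clebsch_adj_def xor_xor_left)

lemma clebsch_adj_nbrs:
  assumes "clebsch_adj y x"
  shows "y \<in> set (clebsch_nbrs x)"
proof -
  have "y = xor x (xor y x)"
    by (simp add: xor.commute xor_cancel_left)
  moreover have "xor y x \<in> set [1, 2, 4, 8, 15]"
    using assms by (simp add: clebsch_adj_def)
  ultimately show ?thesis
    unfolding clebsch_nbrs_def set_map by (rule image_eqI)
qed

lemma xor_clebsch_V: "a \<in> clebsch_V \<Longrightarrow> u \<in> clebsch_V \<Longrightarrow> xor a u \<in> clebsch_V"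
  using xor_less_power_of_two[of a 4 u] by (simp add: clebsch_V_def)

lemma clebsch_E_iff: "{x, y} \<in> clebsch_E \<longleftrightarrow> x \<in> clebsch_V \<and> y \<in> clebsch_V \<and> clebsch_adj x y"
  by (auto simp: clebsch_E_def doubleton_eq_iff clebsch_adj_commute)

lemma clebsch_E_xor:
  assumes "a \<in> clebsch_V" "x \<in> clebsch_V" "y \<in> clebsch_V"
  shows "{xor a x, xor a y} \<in> clebsch_E \<longleftrightarrow> {x, y} \<in> clebsch_E"
  using assms by (simp add: clebsch_E_iff xor_clebsch_V clebsch_adj_xor)

lemma simple_graph_clebsch: "simple_graph clebsch_V clebsch_E"
  by (auto simp: simple_graph_def clebsch_E_def clebsch_V_def clebsch_adj_irrefl card_insert_if)

lemma has_induced_path_xor_translate: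
  assumes "has_induced_path n clebsch_V Es" "a \<in> clebsch_V"
    and "\<And>x y. x \<in> clebsch_V \<Longrightarrow> y \<in> clebsch_V \<Longrightarrow> {xor a x, xor a y} \<in> Es' \<longleftrightarrow> {x, y} \<in> Es"
  shows "has_induced_path n clebsch_V Es'"
proof (rule has_induced_path_embedding[OF assms(1) _ _ assms(3)])
  show "inj_on (xor a) clebsch_V"
    by (simp add: inj_on_def xor_eq_xor_iff)
  show "xor a ` clebsch_V \<subseteq> clebsch_V"
    using assms(2) xor_clebsch_V by blast
qed

lemma clebsch_P6_free: "\<not> has_induced_path 6 clebsch_V clebsch_E"
proof
  have no_extension: "\<not> extendable clebsch_adj clebsch_nbrs 5 [0]"
    by code_simp
  assume "has_induced_path 6 clebsch_V clebsch_E"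
  then obtain xs where xs: "length xs = 6" "set xs \<subseteq> clebsch_V" "induced_path clebsch_adj xs"
    using has_induced_path_iff_induced_path[of clebsch_V clebsch_E clebsch_adj] clebsch_E_iff
    by blast
  define ys where "ys = map (xor (last xs)) xs"
  have "induced_path clebsch_adj ys"
    unfolding ys_def using xs(3)
    by (subst induced_path_map) (auto simp: inj_on_def xor_eq_xor_iff clebsch_adj_xor)
  moreover have "ys = butlast ys @ [0]"
  proof -
    have "xs \<noteq> []"
      using xs(1) by auto
    then have "ys \<noteq> []" "last ys = 0"
      by (simp_all add: ys_def last_map)
    then show ?thesis
      by (metis append_butlast_last_id)
  qed
  ultimately have "extendable clebsch_adj clebsch_nbrs (length (butlast ys)) [0]"
    by (metis extendable_if_induced_path clebsch_adj_nbrs not_Cons_self2)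
  then show False
    using no_extension xs(1) by (simp add: ys_def)
qed

lemma clebsch_minus_edge_at_0:
  assumes "clebsch_adj 0 s"
  shows "has_induced_path 6 clebsch_V (clebsch_E - {{0, s}})"
proof -
  have "\<forall>s\<in>set [0..<16]. clebsch_adj 0 s \<longrightarrow>
    (\<exists>xs\<in>set [[0, 2, 6, 7, 5, 1], [0, 1, 5, 7, 6, 2], [0, 1, 3, 7, 6, 4],
               [0, 1, 3, 7, 8, 10], [0, 1, 3, 7, 15, 13]].
      length xs = 6 \<and> (\<forall>x\<in>set xs. x < 16) \<and>
      induced_path (\<lambda>x y. clebsch_adj x y \<and> {x, y} \<noteq> {0, s}) xs)"
    by code_simp
  moreover have "s \<in> set [0..<16]"
    using assms by (auto simp: clebsch_adj_def)
  ultimately obtain xs where "length xs = 6" "\<forall>x\<in>set xs. x < 16"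
    "induced_path (\<lambda>x y. clebsch_adj x y \<and> {x, y} \<noteq> {0, s}) xs"
    using assms by blast
  then show ?thesis
  proof (intro has_induced_path_iff_induced_path[THEN iffD2] exI conjI)
    show "{x, y} \<in> clebsch_E - {{0, s}} \<longleftrightarrow> clebsch_adj x y \<and> {x, y} \<noteq> {0, s}"
      if "x \<in> clebsch_V" "y \<in> clebsch_V" for x y
      using that by (auto simp: clebsch_E_iff)
  qed (auto simp: clebsch_V_def)
qed

lemma clebsch_plus_nonedge_at_0:
  assumes "t \<in> clebsch_V" "t \<noteq> 0" "\<not> clebsch_adj 0 t"
  shows "has_induced_path 6 clebsch_V (insert {0, t} clebsch_E)"
proof -
  have "\<forall>t\<in>set [1..<16]. \<not> clebsch_adj 0 t \<longrightarrow>
    (\<exists>xs\<in>set [[0, 3, 7, 5, 10, 14], [0, 5, 7, 3, 11, 9], [0, 6, 7, 3, 11, 10],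
               [0, 7, 3, 11, 9, 13], [0, 9, 6, 7, 3, 12], [0, 10, 5, 7, 3, 12],
               [0, 11, 3, 7, 5, 13], [0, 12, 3, 7, 5, 10], [0, 13, 5, 7, 3, 11],
               [0, 14, 6, 7, 3, 11]].
      length xs = 6 \<and> (\<forall>x\<in>set xs. x < 16) \<and>
      induced_path (\<lambda>x y. clebsch_adj x y \<or> {x, y} = {0, t}) xs)"
    by code_simp
  moreover have "t \<in> set [1..<16]"
    using assms(1,2) by (auto simp: clebsch_V_def)
  ultimately obtain xs where "length xs = 6" "\<forall>x\<in>set xs. x < 16"
    "induced_path (\<lambda>x y. clebsch_adj x y \<or> {x, y} = {0, t}) xs"
    using assms(3) by blast
  then show ?thesis
  proof (intro has_induced_path_iff_induced_path[THEN iffD2] exI conjI)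
    show "{x, y} \<in> insert {0, t} clebsch_E \<longleftrightarrow> clebsch_adj x y \<or> {x, y} = {0, t}"
      if "x \<in> clebsch_V" "y \<in> clebsch_V" for x y
      using that by (simp add: clebsch_E_iff disj_commute)
  qed (auto simp: clebsch_V_def)
qed

lemma clebsch_minus_edge:
  assumes "e \<in> clebsch_E"
  shows "has_induced_path 6 clebsch_V (clebsch_E - {e})"
proof -
  obtain a b where e: "e = {a, b}" and ab: "a \<in> clebsch_V" "b \<in> clebsch_V" "clebsch_adj a b"
    using assms by (auto simp: clebsch_E_def)
  define s where "s = xor a b"
  have e_xor: "e = {xor a 0, xor a s}"
    by (simp add: e s_def xor_cancel_left)
  have "clebsch_adj 0 s"
    using ab(3) clebsch_adj_xor[of a 0 s] by (simp add: s_def xor_cancel_left)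
  then have "has_induced_path 6 clebsch_V (clebsch_E - {{0, s}})"
    by (rule clebsch_minus_edge_at_0)
  then show ?thesis
    using ab(1) by (rule has_induced_path_xor_translate)
      (simp only: e_xor Diff_iff singleton_iff clebsch_E_xor[OF ab(1)] xor_doubleton_eq_iff)
qed

lemma clebsch_plus_nonedge:
  assumes "x \<in> clebsch_V" "y \<in> clebsch_V" "x \<noteq> y" "{x, y} \<notin> clebsch_E"
  shows "has_induced_path 6 clebsch_V (insert {x, y} clebsch_E)"
proof -
  define t where "t = xor x y"
  have xy_xor: "{x, y} = {xor x 0, xor x t}"
    by (simp add: t_def xor_cancel_left)
  have "t \<in> clebsch_V"
    using assms(1,2) by (simp add: t_def xor_clebsch_V)
  moreover have "t \<noteq> 0"
    using assms(3) xor_eq_xor_iff[of x y x] by (simp add: t_def)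
  moreover have "\<not> clebsch_adj 0 t"
    using assms clebsch_adj_xor[of x 0 t] by (simp add: t_def xor_cancel_left clebsch_E_iff)
  ultimately have "has_induced_path 6 clebsch_V (insert {0, t} clebsch_E)"
    by (rule clebsch_plus_nonedge_at_0)
  then show ?thesis
    using assms(1) by (rule has_induced_path_xor_translate)
      (simp only: xy_xor insert_iff clebsch_E_xor[OF assms(1)] xor_doubleton_eq_iff)
qed

theorem theorem1:
  shows "\<exists>(V :: nat set) Es. simple_graph V Es \<and> 2 \<le> card V \<and> induced_path_saturated 6 V Es"
proof (intro exI conjI)
  show "simple_graph clebsch_V clebsch_E"
    by (rule simple_graph_clebsch)
  show "2 \<le> card clebsch_V"
    by (simp add: clebsch_V_def)
  show "induced_path_saturated 6 clebsch_V clebsch_E"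
    unfolding induced_path_saturated_def
    using clebsch_P6_free clebsch_minus_edge clebsch_plus_nonedge by blast
qed

end
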